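(* Let $\alpha<_c\beta$ with $\beta/\!\!/\alpha$ an nc border strip with $n$ boxes, and let $w\in CRHW_n$ satisfy $w(\alpha)=\beta$. If $j\in E(\beta/\!\!/\alpha)$, then $j\in\mathrm{leg}(w)$.
   Context: A composition is a finite sequence $\alpha=(\alpha_1,\dots,\alpha_k)$ of positive integers; $\ell(\alpha)=k$; its diagram is the set of boxes $(i,j)$, $1\le i\le\ell(\alpha)$, $1\le j\le\alpha_i$, rows top to bottom, columns left to right. For compositions $\gamma=(\gamma_1,\dots,\gamma_l)$, $\delta$ write $\gamma\lessdot_c\delta$ if $\delta=(1,\gamma_1,\dots,\gamma_l)$ or $\delta=(\gamma_1,\dots,\gamma_k+1,\dots,\gamma_l)$ with $\gamma_i\ne\gamma_k$ for all $i<k$; $<_c$ is the transitive closure. For $\gamma<_c\delta$, $\delta/\!\!/\gamma$ consists of the boxes of $\delta$ other than $(\ell(\delta)-\ell(\gamma)+i,j)$, $1\le i\le\ell(\gamma)$, $1\le j\le\gamma_i$. $\mathrm{supp}(\beta/\!\!/\alpha)$ is the set of columns containing a box of $\beta/\!\!/\alpha$; interval shape: supp is a set of consecutive integers. nc border strip: an interval shape such that (1) if $(i,1),(i,2)\in\beta/\!\!/\alpha$ then $(i,1)$ is the bottommost box of column 1 of $\beta/\!\!/\alpha$, and (2) if $(i,j),(i,j+1)\in\beta/\!\!/\alpha$ with $j\ge2$ then $(i,j)$ is the topmost box of column $j$ of $\beta/\!\!/\alpha$. $E(\beta/\!\!/\alpha)$ is the set of $j$ such that $(i,j),(i,j+1)\in\beta/\!\!/\alpha$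 for some $i$. Box-adding operators: $\mathfrak t_1(\alpha)=(1,\alpha_1,\dots,\alpha_k)$; for $i\ge2$, $\mathfrak t_i(\alpha)$ increases the leftmost part equal to $i-1$ by $1$, and is $0$ if none; $\mathfrak t_i(0)=0$. A word $w=\mathfrak t_{i_1}\cdots\mathfrak t_{i_n}$ acts by $w(\alpha)=\mathfrak t_{i_1}(\cdots\mathfrak t_{i_n}(\alpha))$; it is a reverse $k$-hookword if $i_1\le\cdots\le i_{k+1}>i_{k+2}>\cdots>i_n$, with $\mathrm{leg}(w)=\{i_{k+1},\dots,i_n\}$; connected if $\{i_1,\dots,i_n\}$ is a set of consecutive integers; $CRHW_n$ is the set of connected reverse hookwords of length $n$. *)

theory Defs
  imports Main
begin

text \<open>Compositions are lists of positive naturals. Boxes are pairs (row, column), 1-indexed,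
rows top to bottom.\<close>

definition is_comp :: "nat list \<Rightarrow> bool" where
  "is_comp a \<longleftrightarrow> (\<forall>x\<in>set a. 0 < x)"

definition diagram :: "nat list \<Rightarrow> (nat \<times> nat) set" where
  "diagram a = {(i, j). 1 \<le> i \<and> i \<le> length a \<and> 1 \<le> j \<and> j \<le> a ! (i - 1)}"

definition ccover :: "nat list \<Rightarrow> nat list \<Rightarrow> bool" where
  "ccover g d \<longleftrightarrow> d = 1 # g \<or>
     (\<exists>k < length g. d = g[k := g ! k + 1] \<and> (\<forall>i < k. g ! i \<noteq> g ! k))"

definition clt :: "nat list \<Rightarrow> nat list \<Rightarrow> bool" where
  "clt = tranclp ccover"

text \<open>The skew shape delta // gamma: boxes of delta other than the bottom-justified copy of gamma.\<close>
definition skew :: "nat list \<Rightarrow> nat list \<Rightarrow> (nat \<times> nat) set" where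
  "skew d g = diagram d -
     {(length d - length g + i, j) | i j. 1 \<le> i \<and> i \<le> length g \<and> 1 \<le> j \<and> j \<le> g ! (i - 1)}"

definition supp :: "(nat \<times> nat) set \<Rightarrow> nat set" where
  "supp S = snd ` S"

definition interval_shape :: "(nat \<times> nat) set \<Rightarrow> bool" where
  "interval_shape S \<longleftrightarrow> (\<forall>a b c. a \<in> supp S \<and> c \<in> supp S \<and> a \<le> b \<and> b \<le> c \<longrightarrow> b \<in> supp S)"

definition bottommost_in_col :: "(nat \<times> nat) set \<Rightarrow> nat \<Rightarrow> nat \<Rightarrow> bool" where
  "bottommost_in_col S i j \<longleftrightarrow> (i, j) \<in> S \<and> (\<forall>i'. (i', j) \<in> S \<longrightarrow> i' \<le> i)"

definition topmost_in_col :: "(nat \<times> nat) set \<Rightarrow> nat \<Rightarrow> nat \<Rightarrow> bool" where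
  "topmost_in_col S i j \<longleftrightarrow> (i, j) \<in> S \<and> (\<forall>i'. (i', j) \<in> S \<longrightarrow> i \<le> i')"

definition nc_border_strip :: "(nat \<times> nat) set \<Rightarrow> bool" where
  "nc_border_strip S \<longleftrightarrow> interval_shape S \<and>
     (\<forall>i. (i, 1) \<in> S \<and> (i, 2) \<in> S \<longrightarrow> bottommost_in_col S i 1) \<and>
     (\<forall>i j. 2 \<le> j \<and> (i, j) \<in> S \<and> (i, j + 1) \<in> S \<longrightarrow> topmost_in_col S i j)"

definition Eset :: "(nat \<times> nat) set \<Rightarrow> nat set" where
  "Eset S = {j. \<exists>i. (i, j) \<in> S \<and> (i, j + 1) \<in> S}"

text \<open>Box-adding operators; None plays the role of 0.\<close>
fun top_op :: "nat \<Rightarrow> nat list option \<Rightarrow> nat list option" where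
  "top_op i None = None"
| "top_op i (Some a) =
     (if i = 0 then None
      else if i = 1 then Some (1 # a)
      else if i - 1 \<in> set a
           then Some (a[(LEAST k. k < length a \<and> a ! k = i - 1) := i])
           else None)"

definition word_act :: "nat list \<Rightarrow> nat list \<Rightarrow> nat list option" where
  "word_act w a = foldr top_op w (Some a)"

text \<open>Reverse k-hookword (0-indexed list, so i_{m+1} = w ! m).\<close>
definition rev_khook :: "nat \<Rightarrow> nat list \<Rightarrow> bool" where
  "rev_khook k w \<longleftrightarrow> (\<forall>x\<in>set w. 1 \<le> x) \<and> k < length w \<and> sorted (take (Suc k) w) \<and>
     (\<forall>m. k \<le> m \<and> Suc m < length w \<longrightarrow> w ! Suc m < w ! m)"

definition leg :: "nat \<Rightarrow> nat list \<Rightarrow> nat set" where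
  "leg k w = set (drop k w)"

definition connected_word :: "nat list \<Rightarrow> bool" where
  "connected_word w \<longleftrightarrow> (\<forall>a b c. a \<in> set w \<and> c \<in> set w \<and> a \<le> b \<and> b \<le> c \<longrightarrow> b \<in> set w)"

definition CRHW :: "nat \<Rightarrow> nat list set" where
  "CRHW n = {w. length w = n \<and> connected_word w \<and> (\<exists>k. rev_khook k w)}"

end

theory Submission
  imports Defs
begin

(* Index the rows of a composition from the bottom, so that the
   bottom-justified copy of alpha inside beta occupies the same bottom-indexed
   rows in both.  A box-adding operator t_x raises one row from length x-1 to
   length x.  Hence, if w(alpha) = beta, then along every row p
     (1) alpha's row is no longer than beta's row,
     (2) each value v with row_alpha(p) < v <= row_beta(p) occurs as a letter of w,
     (3) if moreover v < row_beta(p), a letter v+1 occurs to the LEFT of some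
         letter v (box v of the row is added before box v+1).
   If j is in E(beta//alpha), the boxes j and j+1 of some row lie in the skew
   shape, so row_alpha(p) < j < row_beta(p) and (3) gives a letter j+1 left of a
   letter j.  In a reverse hookword the prefix before the leg is weakly
   increasing, so a letter j with a larger letter to its left lies in the leg.
   The argument needs only that alpha is a composition, w(alpha) = beta, w is a
   reverse hookword and j is in E(beta//alpha). *)

definition brow :: "nat list \<Rightarrow> nat \<Rightarrow> nat" where
  "brow xs p = (if p < length xs then rev xs ! p else 0)"

lemma top_op_adds_box:
  assumes "top_op x (Some g) = Some b"
  obtains p where "1 \<le> x" "brow g p = x - 1" "brow b = (brow g)(p := x)"
proof (cases "x = 1")
  case True
  then have b: "b = 1 # g" using assms by simp
  have "brow b q = ((brow g)(length g := 1)) q" for q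
    using b by (auto simp: brow_def nth_append)
  then have "brow b = (brow g)(length g := 1)" ..
  moreover have "brow g (length g) = x - 1" using True by (simp add: brow_def)
  ultimately show ?thesis using True that by simp
next
  case False
  have x0: "x \<noteq> 0" using assms by (auto split: if_splits)
  have mem: "x - 1 \<in> set g" using assms False x0 by (auto split: if_splits)
  define k where "k = (LEAST k. k < length g \<and> g ! k = x - 1)"
  have b: "b = g[k := x]" using assms False x0 mem by (simp add: k_def)
  have "\<exists>k. k < length g \<and> g ! k = x - 1" using mem by (auto simp: in_set_conv_nth)
  then have "k < length g \<and> g ! k = x - 1" unfolding k_def by (rule LeastI_ex)
  then have k: "k < length g" "g ! k = x - 1" by auto
  define p where "p = length g - k - 1"
  have "brow b q = ((brow g)(p := x)) q" for q
    using b k by (auto simp: brow_def rev_update p_def nth_list_update)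
  then have "brow b = (brow g)(p := x)" ..
  moreover have "brow g p = x - 1" using k by (auto simp: brow_def p_def rev_nth)
  ultimately show ?thesis using x0 that by auto
qed

lemma word_act_Cons:
  assumes "word_act (x # w) a = Some b"
  obtains g where "word_act w a = Some g" "top_op x (Some g) = Some b"
  using assms by (cases "word_act w a") (auto simp: word_act_def)

lemma word_act_rows_grow:
  "word_act w a = Some b \<Longrightarrow> brow a p \<le> brow b p"
proof (induction w arbitrary: b)
  case Nil
  then show ?case by (simp add: word_act_def)
next
  case (Cons x w)
  obtain g where g: "word_act w a = Some g" and gb: "top_op x (Some g) = Some b"
    using word_act_Cons[OF Cons.prems] .
  obtain p0 where "1 \<le> x" "brow g p0 = x - 1" "brow b = (brow g)(p0 := x)"
    using top_op_adds_box[OF gb] .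
  then have "brow g p \<le> brow b p" by auto
  then show ?case using Cons.IH[OF g] by simp
qed

lemma word_act_letter_added:
  "\<lbrakk>word_act w a = Some b; brow a p < v; v \<le> brow b p\<rbrakk> \<Longrightarrow> v \<in> set w"
proof (induction w arbitrary: b)
  case Nil
  then show ?case by (simp add: word_act_def)
next
  case (Cons x w)
  obtain g where g: "word_act w a = Some g" and gb: "top_op x (Some g) = Some b"
    using word_act_Cons[OF Cons.prems(1)] .
  obtain p0 where p0: "brow g p0 = x - 1" and b: "brow b = (brow g)(p0 := x)"
    using top_op_adds_box[OF gb] .
  show ?case
  proof (cases "p = p0 \<and> v = x")
    case False
    then have "v \<le> brow g p" using Cons.prems(3) b p0 by (auto split: if_splits)
    then show ?thesis using Cons.IH[OF g Cons.prems(2)] by simp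
  qed simp
qed

text \<open>Within a row, box v is added before box v + 1: some letter v + 1 stands to the
  left of some letter v in the word.\<close>

lemma word_act_letter_order:
  "\<lbrakk>word_act w a = Some b; brow a p < v; v < brow b p\<rbrakk> \<Longrightarrow>
     \<exists>i l. l < i \<and> i < length w \<and> w ! i = v \<and> w ! l = Suc v"
proof (induction w arbitrary: b)
  case Nil
  then show ?case by (simp add: word_act_def)
next
  case (Cons x w)
  obtain g where g: "word_act w a = Some g" and gb: "top_op x (Some g) = Some b"
    using word_act_Cons[OF Cons.prems(1)] .
  obtain p0 where p0: "brow g p0 = x - 1" and b: "brow b = (brow g)(p0 := x)"
    using top_op_adds_box[OF gb] .
  show ?case
  proof (cases "p = p0 \<and> Suc v = x")
    case True
    then have "v \<le> brow g p" using p0 by auto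
    then have "v \<in> set w" using word_act_letter_added[OF g Cons.prems(2)] by simp
    then obtain i where "i < length w" "w ! i = v" by (auto simp: in_set_conv_nth)
    then show ?thesis using True by (intro exI[of _ "Suc i"] exI[of _ 0]) auto
  next
    case False
    then have "v < brow g p" using Cons.prems(3) b p0 by (auto split: if_splits)
    then obtain i l where "l < i" "i < length w" "w ! i = v" "w ! l = Suc v"
      using Cons.IH[OF g Cons.prems(2)] by blast
    then show ?thesis by (intro exI[of _ "Suc i"] exI[of _ "Suc l"]) auto
  qed
qed

text \<open>If w(alpha) = beta, then beta has at least as many rows as alpha, since every
  row of a composition is nonempty and rows never shrink.\<close>

lemma word_act_length_mono:
  assumes "is_comp \<alpha>" and "word_act w \<alpha> = Some \<beta>"
  shows "length \<alpha> \<le> length \<beta>"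
proof (rule ccontr)
  assume "\<not> length \<alpha> \<le> length \<beta>"
  then have "0 < brow \<alpha> (length \<beta>)"
    using assms(1) by (auto simp: brow_def is_comp_def rev_nth)
  moreover have "brow \<beta> (length \<beta>) = 0" by (simp add: brow_def)
  ultimately show False using word_act_rows_grow[OF assms(2)] by (metis not_le)
qed

lemma skew_box_row_bounds:
  assumes box: "(i, j) \<in> skew \<beta> \<alpha>" and len: "length \<alpha> \<le> length \<beta>"
  shows "brow \<alpha> (length \<beta> - i) < j" and "j \<le> brow \<beta> (length \<beta> - i)"
proof -
  define p where "p = length \<beta> - i"
  have i: "1 \<le> i" "i \<le> length \<beta>" and j: "1 \<le> j" "j \<le> \<beta> ! (i - 1)"
    using box by (auto simp: skew_def diagram_def)
  show "j \<le> brow \<beta> (length \<beta> - i)" using i j by (auto simp: brow_def rev_nth)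
  show "brow \<alpha> (length \<beta> - i) < j"
  proof (cases "p < length \<alpha>")
    case False
    then show ?thesis using j by (simp add: brow_def p_def)
  next
    case True
    define i' where "i' = length \<alpha> - p"
    have i': "i = length \<beta> - length \<alpha> + i'" "1 \<le> i'" "i' \<le> length \<alpha>"
      using True i len by (auto simp: i'_def p_def)
    have row: "brow \<alpha> p = \<alpha> ! (i' - 1)"
      using True by (auto simp: brow_def rev_nth i'_def)
    have "\<not> j \<le> \<alpha> ! (i' - 1)"
    proof
      assume "j \<le> \<alpha> ! (i' - 1)"
      then have "(i, j) \<in> {(length \<beta> - length \<alpha> + i, j) | i j.
                    1 \<le> i \<and> i \<le> length \<alpha> \<and> 1 \<le> j \<and> j \<le> \<alpha> ! (i - 1)}"
        using i' j by blast
      then show False using box by (simp add: skew_def)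
    qed
    then show ?thesis using row by (simp add: p_def)
  qed
qed

text \<open>In a reverse k-hookword the first k + 1 letters weakly increase, so a letter
  having a strictly larger letter to its left must belong to the leg.\<close>

lemma rev_khook_descent_in_leg:
  assumes "rev_khook k w" and "l < i" "i < length w" "w ! i < w ! l"
  shows "w ! i \<in> leg k w"
proof (cases "k \<le> i")
  case True
  then show ?thesis using assms(3) by (auto simp: leg_def in_set_conv_nth intro!: exI[of _ "i - k"])
next
  case False
  have "sorted (take (Suc k) w)" using assms(1) by (simp add: rev_khook_def)
  then have "take (Suc k) w ! l \<le> take (Suc k) w ! i"
    by (rule sorted_nth_mono) (use assms False in auto)
  then show ?thesis using assms False by simp
qed

theorem mainTheorem12:
  fixes \<alpha> \<beta> w :: "nat list" and n j :: nat
  assumes "is_comp \<alpha>" and "is_comp \<beta>"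
    and "clt \<alpha> \<beta>"
    and "nc_border_strip (skew \<beta> \<alpha>)"
    and "card (skew \<beta> \<alpha>) = n"
    and "w \<in> CRHW n"
    and "word_act w \<alpha> = Some \<beta>"
    and "j \<in> Eset (skew \<beta> \<alpha>)"
  shows "\<forall>k. rev_khook k w \<longrightarrow> j \<in> leg k w"
proof (intro allI impI)
  fix k assume hook: "rev_khook k w"
  obtain i where "(i, j) \<in> skew \<beta> \<alpha>" and "(i, Suc j) \<in> skew \<beta> \<alpha>"
    using assms(8) by (auto simp: Eset_def)
  moreover have "length \<alpha> \<le> length \<beta>" using word_act_length_mono assms(1,7) .
  ultimately have "brow \<alpha> (length \<beta> - i) < j" and "j < brow \<beta> (length \<beta> - i)"
    using skew_box_row_bounds by (fastforce, fastforce)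
  then obtain a l where "l < a" "a < length w" "w ! a = j" "w ! l = Suc j"
    using word_act_letter_order[OF assms(7)] by blast
  then show "j \<in> leg k w" using rev_khook_descent_in_leg[OF hook] by fastforce
qed

end
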